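(* Let $M\equiv\lambda\,\mathit{argClass}.\,\mathbf{Y}(\lambda\,\mathit{myClass}\,\lambda\,\mathit{state}.\,(\mathit{argClass}\;\mathit{state})\oplus R)$ be a mixin. For any type $\sigma\in\mathbb{T}$ and any $\rho=\langle l:\tau\rangle$ with $l\notin\mathit{lbl}(R)$, we have $\vdash M:(\sigma\to\rho)\to(\sigma\to\rho)$.
   Context: \textbf{Terms.} $\Lambda_R\ni M,N ::= x\mid\lambda x.M\mid MN\mid M.l\mid R\mid M\oplus R$, records $R ::= \langle l_i=M_i\mid i\in I\rangle$ ($I$ finite, labels pairwise distinct), $\mathit{lbl}(\langle l_i=M_i\mid i\in I\rangle)=\{l_i\mid i\in I\}$. $\mathbf{Y}=\lambda f.(\lambda x.f(xx))(\lambda x.f(xx))$. A mixin is a closed term of the displayed form ($R$ may mention $\mathit{argClass},\mathit{myClass},\mathit{state}$). \textbf{Types.} $\mathbb{T}\ni\sigma ::= a\mid\omega\mid\sigma_1\to\sigma_2\mid\sigma_1\cap\sigma_2\mid\rho$, $\mathbb{T}_R\ni\rho ::= \langle\rangle\mid\langle l:\sigma\rangle\mid\rho_1+\rho_2\mid\rho_1\cap\rho_2$. Subtyping $\le$: least preorder with $\sigma\le\omega$; $\omega\le\omega\to\omega$; $\sigma\cap\tau\le\sigma,\tau$; $\sigma\le\tau_1,\sigma\le\tau_2\Rightarrow\sigma\le\tau_1\cap\tau_2$; $(\sigma\to\tau_1)\cap(\sigma\to\tau_2)\le\sigma\to\tau_1\cap\tau_2$; $\sigma_2\le\sigma_1,\tau_1\le\tau_2\Rightarrow\sigma_1\to\tau_1\le\sigma_2\to\tau_2$;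 $\langle l:\sigma\rangle\le\langle\rangle$; $\langle l:\sigma\rangle\cap\langle l:\tau\rangle\le\langle l:\sigma\cap\tau\rangle$; $\sigma\le\tau\Rightarrow\langle l:\sigma\rangle\le\langle l:\tau\rangle$; $\rho+\langle\rangle=\langle\rangle+\rho=\rho$; $(\rho_1+\rho_2)+\rho_3=\rho_1+(\rho_2+\rho_3)$; $(\rho_1\cap\rho_2)+\rho_3=(\rho_1+\rho_3)\cap(\rho_2+\rho_3)$; $\langle l:\sigma\rangle+(\langle l:\tau\rangle\cap\rho)=\langle l:\tau\rangle\cap\rho$; $\langle l:\sigma\rangle+(\langle l':\tau\rangle\cap\rho)=\langle l':\tau\rangle\cap(\langle l:\sigma\rangle+\rho)$ if $l\neq l'$; $\rho_1\le\rho_2\Rightarrow\rho_1+\rho\le\rho_2+\rho$; $\rho_1=\rho_2\Rightarrow\rho+\rho_1=\rho+\rho_2$ ($=$ is $\le$ both ways). $\mathit{lbl}(\langle\rangle)=\emptyset$, $\mathit{lbl}(\langle l:\sigma\rangle)=\{l\}$, $\mathit{lbl}(\rho_1\cap\rho_2)=\mathit{lbl}(\rho_1+\rho_2)=\mathit{lbl}(\rho_1)\cup\mathit{lbl}(\rho_2)$. \textbf{Type assignment} $\Gamma\vdash M:\sigma$ ($\vdash$ alone means empty basis): $\Gamma\vdash x:\sigma$ if $x:\sigma\in\Gamma$; $\to$-introduction and elimination; $\cap$-introduction; $\Gamma\vdash M:\omega$; subsumption along $\le$; $\Gamma\vdash\langle l_i=M_i\mid i\in I\rangle:\langle\rangle$;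 from $\Gamma\vdash M_k:\sigma$, $k\in I$ infer $\Gamma\vdash\langle l_i=M_i\mid i\in I\rangle:\langle l_k:\sigma\rangle$; from $\Gamma\vdash M:\langle l:\sigma\rangle$ infer $\Gamma\vdash M.l:\sigma$; from $\Gamma\vdash M:\rho_1$, $\Gamma\vdash R:\rho_2$, $\mathit{lbl}(R)=\mathit{lbl}(\rho_2)$ infer $\Gamma\vdash M\oplus R:\rho_1+\rho_2$. *)

theory Defs
  imports Main
begin

type_synonym var = string
type_synonym label = string
type_synonym tconst = string

text \<open>A record \<langle>l_i = M_i | i \<in> I\<rangle> is represented by the list of its fields;
  Ext M fs is M \<oplus> \<langle>fs\<rangle>.\<close>

datatype trm =
    Var var
  | Lam var trm
  | App trm trm
  | Sel trm label
  | Rec "(label \<times> trm) list"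
  | Ext trm "(label \<times> trm) list"

fun fv :: "trm \<Rightarrow> var set" where
  "fv (Var x) = {x}"
| "fv (Lam x M) = fv M - {x}"
| "fv (App M N) = fv M \<union> fv N"
| "fv (Sel M l) = fv M"
| "fv (Rec fs) = (\<Union>p\<in>set fs. fv (snd p))"
| "fv (Ext M fs) = fv M \<union> (\<Union>p\<in>set fs. fv (snd p))"

fun wf_trm :: "trm \<Rightarrow> bool" where
  "wf_trm (Var x) = True"
| "wf_trm (Lam x M) = wf_trm M"
| "wf_trm (App M N) = (wf_trm M \<and> wf_trm N)"
| "wf_trm (Sel M l) = wf_trm M"
| "wf_trm (Rec fs) = (distinct (map fst fs) \<and> (\<forall>p\<in>set fs. wf_trm (snd p)))"
| "wf_trm (Ext M fs) = (wf_trm M \<and> distinct (map fst fs) \<and> (\<forall>p\<in>set fs. wf_trm (snd p)))"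

definition rlbl :: "(label \<times> trm) list \<Rightarrow> label set" where
  "rlbl fs = set (map fst fs)"

definition Ycomb :: trm where
  "Ycomb = Lam ''f'' (App (Lam ''x'' (App (Var ''f'') (App (Var ''x'') (Var ''x''))))
                          (Lam ''x'' (App (Var ''f'') (App (Var ''x'') (Var ''x'')))))"

definition mixin :: "var \<Rightarrow> var \<Rightarrow> var \<Rightarrow> (label \<times> trm) list \<Rightarrow> trm" where
  "mixin a m s R = Lam a (App Ycomb (Lam m (Lam s (Ext (App (Var a) (Var s)) R))))"

datatype ty =
    TConst tconst
  | Omega
  | Arrow ty ty
  | Inter ty ty
  | REmpty
  | RField label ty
  | RPlus ty ty

text \<open>is_ty carves out \<open>\<T>\<close>, is_rty carves out \<open>\<T>_R\<close>.\<close>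
fun is_ty :: "ty \<Rightarrow> bool" and is_rty :: "ty \<Rightarrow> bool" where
  "is_ty (TConst a) = True"
| "is_ty Omega = True"
| "is_ty (Arrow s t) = (is_ty s \<and> is_ty t)"
| "is_ty (Inter s t) = (is_ty s \<and> is_ty t)"
| "is_ty REmpty = True"
| "is_ty (RField l s) = is_ty s"
| "is_ty (RPlus r1 r2) = (is_rty r1 \<and> is_rty r2)"
| "is_rty REmpty = True"
| "is_rty (RField l s) = is_ty s"
| "is_rty (RPlus r1 r2) = (is_rty r1 \<and> is_rty r2)"
| "is_rty (Inter r1 r2) = (is_rty r1 \<and> is_rty r2)"
| "is_rty (TConst a) = False"
| "is_rty Omega = False"
| "is_rty (Arrow s t) = False"

fun tlbl :: "ty \<Rightarrow> label set" where
  "tlbl REmpty = {}"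
| "tlbl (RField l s) = {l}"
| "tlbl (Inter r1 r2) = tlbl r1 \<union> tlbl r2"
| "tlbl (RPlus r1 r2) = tlbl r1 \<union> tlbl r2"
| "tlbl _ = {}"

section \<open>Subtyping (least preorder on \<T> closed under the rules; = is \<le> both ways)\<close>

inductive sub :: "ty \<Rightarrow> ty \<Rightarrow> bool" (infix "\<le>\<^sub>T" 50) where
  refl: "is_ty s \<Longrightarrow> s \<le>\<^sub>T s"
| trans: "s \<le>\<^sub>T t \<Longrightarrow> t \<le>\<^sub>T u \<Longrightarrow> s \<le>\<^sub>T u"
| top: "is_ty s \<Longrightarrow> s \<le>\<^sub>T Omega"
| omega_arrow: "Omega \<le>\<^sub>T Arrow Omega Omega"
| inter_l: "is_ty s \<Longrightarrow> is_ty t \<Longrightarrow> Inter s t \<le>\<^sub>T s"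
| inter_r: "is_ty s \<Longrightarrow> is_ty t \<Longrightarrow> Inter s t \<le>\<^sub>T t"
| inter_glb: "s \<le>\<^sub>T t1 \<Longrightarrow> s \<le>\<^sub>T t2 \<Longrightarrow> s \<le>\<^sub>T Inter t1 t2"
| arrow_inter: "is_ty s \<Longrightarrow> is_ty t1 \<Longrightarrow> is_ty t2 \<Longrightarrow>
     Inter (Arrow s t1) (Arrow s t2) \<le>\<^sub>T Arrow s (Inter t1 t2)"
| arrow: "s2 \<le>\<^sub>T s1 \<Longrightarrow> t1 \<le>\<^sub>T t2 \<Longrightarrow> Arrow s1 t1 \<le>\<^sub>T Arrow s2 t2"
| field_empty: "is_ty s \<Longrightarrow> RField l s \<le>\<^sub>T REmpty"
| field_inter: "is_ty s \<Longrightarrow> is_ty t \<Longrightarrow> Inter (RField l s) (RField l t) \<le>\<^sub>T RField l (Inter s t)"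
| field_mono: "s \<le>\<^sub>T t \<Longrightarrow> RField l s \<le>\<^sub>T RField l t"
| plus_empty_r1: "is_rty r \<Longrightarrow> RPlus r REmpty \<le>\<^sub>T r"
| plus_empty_r2: "is_rty r \<Longrightarrow> r \<le>\<^sub>T RPlus r REmpty"
| plus_empty_l1: "is_rty r \<Longrightarrow> RPlus REmpty r \<le>\<^sub>T r"
| plus_empty_l2: "is_rty r \<Longrightarrow> r \<le>\<^sub>T RPlus REmpty r"
| plus_assoc1: "is_rty r1 \<Longrightarrow> is_rty r2 \<Longrightarrow> is_rty r3 \<Longrightarrow>
     RPlus (RPlus r1 r2) r3 \<le>\<^sub>T RPlus r1 (RPlus r2 r3)"
| plus_assoc2: "is_rty r1 \<Longrightarrow> is_rty r2 \<Longrightarrow> is_rty r3 \<Longrightarrow>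
     RPlus r1 (RPlus r2 r3) \<le>\<^sub>T RPlus (RPlus r1 r2) r3"
| plus_distr1: "is_rty r1 \<Longrightarrow> is_rty r2 \<Longrightarrow> is_rty r3 \<Longrightarrow>
     RPlus (Inter r1 r2) r3 \<le>\<^sub>T Inter (RPlus r1 r3) (RPlus r2 r3)"
| plus_distr2: "is_rty r1 \<Longrightarrow> is_rty r2 \<Longrightarrow> is_rty r3 \<Longrightarrow>
     Inter (RPlus r1 r3) (RPlus r2 r3) \<le>\<^sub>T RPlus (Inter r1 r2) r3"
| plus_same1: "is_ty s \<Longrightarrow> is_ty t \<Longrightarrow> is_rty r \<Longrightarrow>
     RPlus (RField l s) (Inter (RField l t) r) \<le>\<^sub>T Inter (RField l t) r"
| plus_same2: "is_ty s \<Longrightarrow> is_ty t \<Longrightarrow> is_rty r \<Longrightarrow>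
     Inter (RField l t) r \<le>\<^sub>T RPlus (RField l s) (Inter (RField l t) r)"
| plus_diff1: "l \<noteq> l' \<Longrightarrow> is_ty s \<Longrightarrow> is_ty t \<Longrightarrow> is_rty r \<Longrightarrow>
     RPlus (RField l s) (Inter (RField l' t) r) \<le>\<^sub>T Inter (RField l' t) (RPlus (RField l s) r)"
| plus_diff2: "l \<noteq> l' \<Longrightarrow> is_ty s \<Longrightarrow> is_ty t \<Longrightarrow> is_rty r \<Longrightarrow>
     Inter (RField l' t) (RPlus (RField l s) r) \<le>\<^sub>T RPlus (RField l s) (Inter (RField l' t) r)"
| plus_mono_l: "r1 \<le>\<^sub>T r2 \<Longrightarrow> is_rty r1 \<Longrightarrow> is_rty r2 \<Longrightarrow> is_rty r \<Longrightarrow>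
     RPlus r1 r \<le>\<^sub>T RPlus r2 r"
| plus_cong_r: "r1 \<le>\<^sub>T r2 \<Longrightarrow> r2 \<le>\<^sub>T r1 \<Longrightarrow> is_rty r1 \<Longrightarrow> is_rty r2 \<Longrightarrow> is_rty r \<Longrightarrow>
     RPlus r r1 \<le>\<^sub>T RPlus r r2"

type_synonym basis = "var \<Rightarrow> ty option"

inductive typing :: "basis \<Rightarrow> trm \<Rightarrow> ty \<Rightarrow> bool" ("_ \<turnstile> _ : _" [50,50,50] 50) where
  ax: "\<Gamma> x = Some s \<Longrightarrow> \<Gamma> \<turnstile> Var x : s"
| arrI: "is_ty s \<Longrightarrow> \<Gamma>(x \<mapsto> s) \<turnstile> M : t \<Longrightarrow> \<Gamma> \<turnstile> Lam x M : Arrow s t"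
| arrE: "\<Gamma> \<turnstile> M : Arrow s t \<Longrightarrow> \<Gamma> \<turnstile> N : s \<Longrightarrow> \<Gamma> \<turnstile> App M N : t"
| interI: "\<Gamma> \<turnstile> M : s \<Longrightarrow> \<Gamma> \<turnstile> M : t \<Longrightarrow> \<Gamma> \<turnstile> M : Inter s t"
| omega: "\<Gamma> \<turnstile> M : Omega"
| subsum: "\<Gamma> \<turnstile> M : s \<Longrightarrow> s \<le>\<^sub>T t \<Longrightarrow> \<Gamma> \<turnstile> M : t"
| rec_empty: "\<Gamma> \<turnstile> Rec fs : REmpty"
| rec_field: "(l, N) \<in> set fs \<Longrightarrow> \<Gamma> \<turnstile> N : s \<Longrightarrow> \<Gamma> \<turnstile> Rec fs : RField l s"
| sel: "\<Gamma> \<turnstile> M : RField l s \<Longrightarrow> \<Gamma> \<turnstile> Sel M l : s"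
| ext: "\<Gamma> \<turnstile> M : r1 \<Longrightarrow> \<Gamma> \<turnstile> Rec fs : r2 \<Longrightarrow> is_rty r1 \<Longrightarrow> is_rty r2 \<Longrightarrow>
        rlbl fs = tlbl r2 \<Longrightarrow> \<Gamma> \<turnstile> Ext M fs : RPlus r1 r2"

end

theory Submission
  imports Defs
begin

text \<open>The fixed-point combinator has type \<open>(\<omega> \<rightarrow> T) \<rightarrow> T\<close> for every \<open>T\<close>, since the
  self-application \<open>x x\<close> only needs type \<open>\<omega>\<close>. So the body of the mixin need only have type
  \<open>\<omega> \<rightarrow> \<sigma> \<rightarrow> \<langle>l:\<tau>\<rangle>\<close>, i.e. \<open>(argClass state) \<oplus> R : \<langle>l:\<tau>\<rangle>\<close>. The record \<open>R\<close> has the type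
  \<open>\<langle>l\<^sub>1:\<omega>\<rangle> \<inter> \<dots> \<inter> \<langle>l\<^sub>n:\<omega>\<rangle>\<close> carrying exactly its labels, and as \<open>l\<close> is not among them the
  record-merge rules give \<open>\<langle>l:\<tau>\<rangle> + (\<langle>l\<^sub>1:\<omega>\<rangle> \<inter> \<dots> \<inter> \<langle>l\<^sub>n:\<omega>\<rangle>) \<le> \<langle>l:\<tau>\<rangle>\<close>.\<close>

declare sub.trans [trans]

fun omega_rty :: "(label \<times> trm) list \<Rightarrow> ty" where
  "omega_rty [] = REmpty"
| "omega_rty (p # fs) = Inter (RField (fst p) Omega) (omega_rty fs)"

lemma is_rty_omega_rty: "is_rty (omega_rty fs)"
  by (induction fs) auto

lemma tlbl_omega_rty: "tlbl (omega_rty fs) = rlbl fs"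
  by (induction fs) (auto simp: rlbl_def)

lemma typing_Rec_omega_rty:
  assumes "set fs' \<subseteq> set fs"
  shows "\<Gamma> \<turnstile> Rec fs : omega_rty fs'"
  using assms
proof (induction fs')
  case Nil
  show ?case by (simp add: typing.rec_empty)
next
  case (Cons p fs')
  then have "\<Gamma> \<turnstile> Rec fs : RField (fst p) Omega"
    by (intro typing.rec_field[of _ "snd p"]) (auto intro: typing.omega)
  with Cons show ?case by (auto intro: typing.interI)
qed

lemma sub_RPlus_RField_omega_rty:
  assumes "l \<notin> rlbl fs" and "is_ty \<tau>"
  shows "RPlus (RField l \<tau>) (omega_rty fs) \<le>\<^sub>T RField l \<tau>"
  using assms
proof (induction fs)
  case Nil
  then show ?case by (auto intro: sub.plus_empty_r1)
next
  case (Cons p fs)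
  then have "RPlus (RField l \<tau>) (Inter (RField (fst p) Omega) (omega_rty fs)) \<le>\<^sub>T
      Inter (RField (fst p) Omega) (RPlus (RField l \<tau>) (omega_rty fs))"
    by (intro sub.plus_diff1) (auto simp: rlbl_def is_rty_omega_rty)
  also have "\<dots> \<le>\<^sub>T RPlus (RField l \<tau>) (omega_rty fs)"
    using Cons.prems by (intro sub.inter_r) (auto simp: is_rty_omega_rty)
  also have "\<dots> \<le>\<^sub>T RField l \<tau>"
    using Cons by (simp add: rlbl_def)
  finally show ?case by simp
qed

lemma typing_Ext_RField:
  assumes "\<Gamma> \<turnstile> M : RField l \<tau>" and "l \<notin> rlbl fs" and "is_ty \<tau>"
  shows "\<Gamma> \<turnstile> Ext M fs : RField l \<tau>"
proof -
  have "\<Gamma> \<turnstile> Ext M fs : RPlus (RField l \<tau>) (omega_rty fs)"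
    using assms by (intro typing.ext typing_Rec_omega_rty)
      (auto simp: is_rty_omega_rty tlbl_omega_rty)
  then show ?thesis
    using sub_RPlus_RField_omega_rty[OF assms(2,3)] by (rule typing.subsum)
qed

lemma typing_Ycomb:
  assumes "is_ty T"
  shows "\<Gamma> \<turnstile> Ycomb : Arrow (Arrow Omega T) T"
  unfolding Ycomb_def
proof (rule typing.arrI)
  let ?G = "\<Gamma>(''f'' \<mapsto> Arrow Omega T)"
  have "?G \<turnstile> Lam ''x'' (App (Var ''f'') (App (Var ''x'') (Var ''x''))) : Arrow Omega T"
    by (rule typing.arrI) (auto intro!: typing.arrE[of _ _ Omega] typing.ax typing.omega)
  then show "?G \<turnstile> App (Lam ''x'' (App (Var ''f'') (App (Var ''x'') (Var ''x''))))
      (Lam ''x'' (App (Var ''f'') (App (Var ''x'') (Var ''x'')))) : T"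
    using typing.omega by (rule typing.arrE)
  show "is_ty (Arrow Omega T)" using assms by simp
qed

theorem lemma3p19:
  fixes argClass myClass state :: var and R :: "(label \<times> trm) list"
    and \<sigma> \<tau> :: ty and l :: label
  assumes "distinct [argClass, myClass, state]"
    and "fv (mixin argClass myClass state R) = {}"
    and "wf_trm (mixin argClass myClass state R)"
    and "is_ty \<sigma>" and "is_ty \<tau>"
    and "l \<notin> rlbl R"
  shows "Map.empty \<turnstile> mixin argClass myClass state R :
           Arrow (Arrow \<sigma> (RField l \<tau>)) (Arrow \<sigma> (RField l \<tau>))"
proof -
  let ?T = "Arrow \<sigma> (RField l \<tau>)"
  let ?H = "(Map.empty :: basis)(argClass \<mapsto> ?T)"
  let ?body = "Ext (App (Var argClass) (Var state)) R"
  have T: "is_ty ?T" using assms by simp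
  have "?H(myClass \<mapsto> Omega, state \<mapsto> \<sigma>) \<turnstile> App (Var argClass) (Var state) : RField l \<tau>"
    using assms(1) by (auto intro!: typing.arrE[of _ _ \<sigma>] typing.ax)
  then have "?H(myClass \<mapsto> Omega, state \<mapsto> \<sigma>) \<turnstile> ?body : RField l \<tau>"
    using assms by (intro typing_Ext_RField)
  then have "?H \<turnstile> Lam myClass (Lam state ?body) : Arrow Omega ?T"
    using assms by (auto intro!: typing.arrI)
  with typing_Ycomb[OF T] have "?H \<turnstile> App Ycomb (Lam myClass (Lam state ?body)) : ?T"
    by (rule typing.arrE)
  then show ?thesis
    unfolding mixin_def using T by (intro typing.arrI)
qed

end
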